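(* Consider the full-duplex (FD) two-stage relay selection (TRS) scheme described in the context, with $\varpi=1$, thresholds $\gamma_{th_j}=2^{R_{D_j}}-1$ for $j=1,2$, and power coefficients satisfying $0<a_1<a_2$, $a_1+a_2=1$, $a_2>a_1\gamma_{th_2}$. Then its diversity order is zero: $$-\lim_{\rho\to\infty}\frac{\log P_{TRS}^{FD}(\rho)}{\log\rho}=0 .$$
   Context: Network model. A base station (BS) is at the origin of the plane. There are $K\ge 1$ relays $R_1,\dots,R_K$ whose positions are i.i.d. uniformly distributed in the disc of radius $R_{\mathcal D}>0$ centred at the origin; $d_{SR_i}$ is the distance from the BS to $R_i$. Two users $D_1,D_2$ are at fixed points of the plane at distances $d_1,d_2>0$ from the BS, and $d_{R_iD_j}$ is the Euclidean distance between $R_i$ and $D_j$. Let $\alpha>0$ be the path loss exponent. The random variables $g_{SR_i}$, $g_{R_iD_1}$, $g_{R_iD_2}$ ($i=1,\dots,K$) are exponentially distributed with mean $1$ (squared magnitudes of $\mathcal{CN}(0,1)$ Rayleigh coefficients), $Z_i$ is exponentially distributed with mean $\Omega_{LI}>0$ (loop-interference gain at $R_i$), and all of these are mutually independent and independent of the relay positions. Put $X_i=g_{SR_i}/(1+d_{SR_i}^\alpha)$ and $Y_{ji}=g_{R_iD_j}/(1+d_{R_iD_j}^\alpha)$. Let $\rho>0$ be the transmit SNR, $a_1,a_2$ power allocation coefficients, and $\varpi\in\{0,1\}$ the duplex factor. Define $\gamma_{D_2\to R_i}=\frac{\rho X_i a_2}{\rho X_i a_1+\rho\varpi Z_i+1}$,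 $\gamma_{D_1\to R_i}=\frac{\rho X_i a_1}{\rho\varpi Z_i+1}$, $\gamma^{(i)}_{D_2\to D_1}=\frac{\rho Y_{1i}a_2}{\rho Y_{1i}a_1+1}$, $\gamma^{(i)}_{D_1}=\rho Y_{1i}a_1$, $\gamma^{(i)}_{D_2}=\frac{\rho Y_{2i}a_2}{\rho Y_{2i}a_1+1}$. Target rates $R_{D_1},R_{D_2}>0$ are given; in FD mode $\varpi=1$ and $\gamma_{th_j}=2^{R_{D_j}}-1$. TRS scheme: let $S=\{i: \gamma_{D_2\to R_i}\ge\gamma_{th_2},\ \gamma^{(i)}_{D_2\to D_1}\ge\gamma_{th_2},\ \gamma^{(i)}_{D_2}\ge\gamma_{th_2}\}$. The outage event is that either $S=\emptyset$, or $S\neq\emptyset$ and $\max_{i\in S}\min\{\gamma_{D_1\to R_i},\gamma^{(i)}_{D_1}\}<\gamma_{th_1}$; $P_{TRS}(\rho)$ is its probability, and $P_{TRS}^{FD}$ denotes it in FD mode. *)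

theory Defs
  imports "HOL-Probability.Probability"
begin

type_synonym point = "real \<times> real"

text \<open>Per-relay sample: (relay position R_i, (g_SR_i, (g_RiD1, (g_RiD2, Z_i)))).\<close>
type_synonym relay_sample = "point \<times> real \<times> real \<times> real \<times> real"

definition exp_dist :: "real \<Rightarrow> real measure" where
  "exp_dist mu = density lborel (\<lambda>x. ennreal (exponential_density (1 / mu) x))"

definition relay_measure :: "real \<Rightarrow> real \<Rightarrow> relay_sample measure" where
  "relay_measure RD Omega =
     uniform_measure lborel (cball (0::point) RD) \<Otimes>\<^sub>M
     (exp_dist 1 \<Otimes>\<^sub>M (exp_dist 1 \<Otimes>\<^sub>M (exp_dist 1 \<Otimes>\<^sub>M exp_dist Omega)))"

definition network_measure :: "nat \<Rightarrow> real \<Rightarrow> real \<Rightarrow> (nat \<Rightarrow> relay_sample) measure" where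
  "network_measure K RD Omega = PiM {..<K} (\<lambda>_. relay_measure RD Omega)"

definition gth :: "real \<Rightarrow> real" where
  "gth R = 2 powr R - 1"

definition large_scale :: "real \<Rightarrow> real \<Rightarrow> real \<Rightarrow> real" where
  "large_scale alpha d g = g / (1 + d powr alpha)"

definition gD2R :: "real \<Rightarrow> real \<Rightarrow> real \<Rightarrow> real \<Rightarrow> real \<Rightarrow> real \<Rightarrow> real" where
  "gD2R rho a1 a2 w X Z = rho * X * a2 / (rho * X * a1 + rho * w * Z + 1)"

definition gD1R :: "real \<Rightarrow> real \<Rightarrow> real \<Rightarrow> real \<Rightarrow> real \<Rightarrow> real" where
  "gD1R rho a1 w X Z = rho * X * a1 / (rho * w * Z + 1)"

definition gD2D1 :: "real \<Rightarrow> real \<Rightarrow> real \<Rightarrow> real \<Rightarrow> real" where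
  "gD2D1 rho a1 a2 Y = rho * Y * a2 / (rho * Y * a1 + 1)"

definition gD1 :: "real \<Rightarrow> real \<Rightarrow> real \<Rightarrow> real" where
  "gD1 rho a1 Y = rho * Y * a1"

definition gD2 :: "real \<Rightarrow> real \<Rightarrow> real \<Rightarrow> real \<Rightarrow> real" where
  "gD2 rho a1 a2 Y = rho * Y * a2 / (rho * Y * a1 + 1)"

text \<open>Outage event of the TRS scheme. Users D1, D2 at points u1, u2; duplex factor w.\<close>
definition trs_outage ::
  "nat \<Rightarrow> real \<Rightarrow> point \<Rightarrow> point \<Rightarrow> real \<Rightarrow> real \<Rightarrow> real \<Rightarrow> real \<Rightarrow> real \<Rightarrow> real
   \<Rightarrow> (nat \<Rightarrow> relay_sample) \<Rightarrow> bool" where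
  "trs_outage K alpha u1 u2 rho a1 a2 w gth1 gth2 s =
    (let pos = (\<lambda>i. fst (s i));
         X  = (\<lambda>i. large_scale alpha (norm (pos i)) (fst (snd (s i))));
         Y1 = (\<lambda>i. large_scale alpha (dist (pos i) u1) (fst (snd (snd (s i)))));
         Y2 = (\<lambda>i. large_scale alpha (dist (pos i) u2) (fst (snd (snd (snd (s i))))));
         Z  = (\<lambda>i. snd (snd (snd (snd (s i)))));
         S = {i \<in> {..<K}. gD2R rho a1 a2 w (X i) (Z i) \<ge> gth2 \<and>
                           gD2D1 rho a1 a2 (Y1 i) \<ge> gth2 \<and>
                           gD2 rho a1 a2 (Y2 i) \<ge> gth2}
     in S = {} \<or>
        (S \<noteq> {} \<and> Max ((\<lambda>i. min (gD1R rho a1 w (X i) (Z i)) (gD1 rho a1 (Y1 i))) ` S) < gth1))"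

definition P_TRS ::
  "nat \<Rightarrow> real \<Rightarrow> real \<Rightarrow> real \<Rightarrow> point \<Rightarrow> point \<Rightarrow> real \<Rightarrow> real \<Rightarrow> real \<Rightarrow> real \<Rightarrow> real
   \<Rightarrow> real \<Rightarrow> real" where
  "P_TRS K RD Omega alpha u1 u2 a1 a2 w gth1 gth2 rho =
     measure (network_measure K RD Omega)
       {s \<in> space (network_measure K RD Omega).
          trs_outage K alpha u1 u2 rho a1 a2 w gth1 gth2 s}"

definition P_TRS_FD ::
  "nat \<Rightarrow> real \<Rightarrow> real \<Rightarrow> real \<Rightarrow> point \<Rightarrow> point \<Rightarrow> real \<Rightarrow> real \<Rightarrow> real \<Rightarrow> real
   \<Rightarrow> real \<Rightarrow> real" where
  "P_TRS_FD K RD Omega alpha u1 u2 a1 a2 RD1 RD2 rho =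
     P_TRS K RD Omega alpha u1 u2 a1 a2 1 (gth RD1) (gth RD2) rho"

end

theory Submission
  imports Defs
begin

text \<open>In full-duplex mode the loop interference Z of a relay enters the denominator of its
  SINR in the first decoding stage. A relay whose source link gain is at most 1 and whose loop
  interference exceeds a2 / gth2 therefore fails that stage at every transmit SNR, because
  rho X a2 / (rho X a1 + rho Z + 1) < a2 / Z. The relays are i.i.d., so the event that all of
  them are of this kind has a probability p > 0 independent of rho. Hence
  p \<le> P_TRS_FD(rho) \<le> 1 and ln P_TRS_FD(rho) / ln rho \<rightarrow> 0.\<close>

lemma ln_div_ln_tendsto_0_if_bounded_below:
  fixes f :: "real \<Rightarrow> real"
  assumes "0 < c" and "\<forall>\<^sub>F x in at_top. c \<le> f x \<and> f x \<le> 1"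
  shows "((\<lambda>x. - (ln (f x) / ln x)) \<longlongrightarrow> 0) at_top"
proof -
  have bounds: "\<forall>\<^sub>F x in at_top. 0 \<le> - (ln (f x) / ln x) \<and> - (ln (f x) / ln x) \<le> - ln c / ln x"
    using assms(2) eventually_gt_at_top[of 1]
  proof eventually_elim
    case (elim x)
    then have "0 < f x" "0 < ln x" using \<open>0 < c\<close> by auto
    moreover have "ln c \<le> ln (f x)" "ln (f x) \<le> 0" using elim \<open>0 < c\<close> \<open>0 < f x\<close> by auto
    ultimately show ?case by (auto simp: divide_nonpos_pos divide_right_mono)
  qed
  have "\<forall>\<^sub>F x in at_top. 0 \<le> - (ln (f x) / ln x)"
    using bounds by (rule eventually_mono) (rule conjunct1)
  moreover have "\<forall>\<^sub>F x in at_top. - (ln (f x) / ln x) \<le> - ln c / ln x"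
    using bounds by (rule eventually_mono) (rule conjunct2)
  moreover have "((\<lambda>x. - ln c / ln x) \<longlongrightarrow> 0) at_top"
    by (intro tendsto_divide_0[OF tendsto_const] filterlim_at_top_imp_at_infinity ln_at_top)
  ultimately show ?thesis
    by (rule tendsto_sandwich[OF _ _ tendsto_const])
qed

lemma empty_or_Max_image_less_iff:
  fixes f :: "'a \<Rightarrow> 'b::linorder"
  assumes "finite S"
  shows "(S = {} \<or> S \<noteq> {} \<and> Max (f ` S) < t) \<longleftrightarrow> (\<forall>i\<in>S. f i < t)"
  using assms by (cases "S = {}") auto

lemma emeasure_pair_measure_Times_neq_0:
  assumes "sigma_finite_measure M2" "A \<in> sets M1" "B \<in> sets M2"
    and "emeasure M1 A \<noteq> 0" "emeasure M2 B \<noteq> 0"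
  shows "emeasure (M1 \<Otimes>\<^sub>M M2) (A \<times> B) \<noteq> 0"
  using sigma_finite_measure.emeasure_pair_measure_Times[OF assms(1-3)] assms(4,5) by simp

lemma prob_space_uniform_cball:
  fixes x :: "'a::euclidean_space"
  assumes "0 < r"
  shows "prob_space (uniform_measure lborel (cball x r))"
proof (rule prob_space_uniform_measure)
  show "emeasure lborel (cball x r) \<noteq> 0"
    using assms emeasure_lborel_cball_finite[of x r] by (subst emeasure_eq_ennreal_measure) auto
  show "emeasure lborel (cball x r) \<noteq> \<infinity>"
    using emeasure_lborel_cball_finite[of x r] by simp
qed

lemma prob_space_exp_dist: "0 < mu \<Longrightarrow> prob_space (exp_dist mu)"
  unfolding exp_dist_def by (rule prob_space_exponential_density) simp

lemma sets_exp_dist [simp, measurable_cong]: "sets (exp_dist mu) = sets borel"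
  unfolding exp_dist_def by simp

lemma space_exp_dist [simp]: "space (exp_dist mu) = UNIV"
  unfolding exp_dist_def by simp

lemma emeasure_exp_dist_atMost:
  assumes "0 < mu" "0 \<le> a"
  shows "emeasure (exp_dist mu) {..a} = ennreal (1 - exp (- a / mu))"
  unfolding exp_dist_def using assms by (simp add: emeasure_erlang_density erlang_CDF_0)

lemma emeasure_exp_dist_atLeastAtMost:
  assumes "0 < mu" "0 \<le> a"
  shows "emeasure (exp_dist mu) {0..a} = ennreal (1 - exp (- a / mu))"
proof -
  have "emeasure (exp_dist mu) {0..a} = emeasure (exp_dist mu) {..a}"
    unfolding exp_dist_def
    by (simp add: emeasure_density, intro nn_integral_cong)
       (auto simp: exponential_density_def split: split_indicator)
  with assms show ?thesis by (simp add: emeasure_exp_dist_atMost)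
qed

lemma measure_exp_dist_greaterThan:
  assumes "0 < mu" "0 \<le> c"
  shows "measure (exp_dist mu) {c<..} = exp (- c / mu)"
proof -
  interpret prob_space "exp_dist mu" using assms(1) by (rule prob_space_exp_dist)
  have "measure (exp_dist mu) {c<..} = 1 - measure (exp_dist mu) {..c}"
    using prob_compl[of "{..c}"] by (simp add: Compl_eq_Diff_UNIV[symmetric] not_le)
  with assms show ?thesis by (simp add: measure_def emeasure_exp_dist_atMost)
qed

lemma prob_space_relay_measure:
  "0 < RD \<Longrightarrow> 0 < Omega \<Longrightarrow> prob_space (relay_measure RD Omega)"
  unfolding relay_measure_def
  by (intro prob_space_pair prob_space_uniform_cball prob_space_exp_dist) auto

lemma space_relay_measure [simp]: "space (relay_measure RD Omega) = UNIV"
  unfolding relay_measure_def by (simp add: space_pair_measure)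

lemma prob_space_network_measure:
  "0 < RD \<Longrightarrow> 0 < Omega \<Longrightarrow> prob_space (network_measure K RD Omega)"
  unfolding network_measure_def by (intro prob_space_PiM prob_space_relay_measure)

definition relay_fails ::
  "real \<Rightarrow> point \<Rightarrow> point \<Rightarrow> real \<Rightarrow> real \<Rightarrow> real \<Rightarrow> real \<Rightarrow> real \<Rightarrow> real \<Rightarrow> relay_sample \<Rightarrow> bool"
where
  "relay_fails alpha u1 u2 rho a1 a2 w gth1 gth2 = (\<lambda>(p, gSR, gRD1, gRD2, Z).
     let X = large_scale alpha (norm p) gSR;
         Y1 = large_scale alpha (dist p u1) gRD1;
         Y2 = large_scale alpha (dist p u2) gRD2
     in gth2 \<le> gD2R rho a1 a2 w X Z \<and> gth2 \<le> gD2D1 rho a1 a2 Y1 \<and> gth2 \<le> gD2 rho a1 a2 Y2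
        \<longrightarrow> min (gD1R rho a1 w X Z) (gD1 rho a1 Y1) < gth1)"

lemma trs_outage_iff_all_relays_fail:
  "trs_outage K alpha u1 u2 rho a1 a2 w gth1 gth2 s \<longleftrightarrow>
     (\<forall>i<K. relay_fails alpha u1 u2 rho a1 a2 w gth1 gth2 (s i))"
  unfolding trs_outage_def Let_def
  by (subst empty_or_Max_image_less_iff) (auto simp: relay_fails_def case_prod_beta)

lemma relay_fails_measurable [measurable]:
  "Measurable.pred (relay_measure RD Omega) (relay_fails alpha u1 u2 rho a1 a2 w gth1 gth2)"
  unfolding relay_measure_def relay_fails_def gD2R_def gD2D1_def gD2_def gD1R_def gD1_def
    large_scale_def Let_def case_prod_beta
  by measurable

lemma P_TRS_eq_power:
  assumes "0 < RD" "0 < Omega"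
  shows "P_TRS K RD Omega alpha u1 u2 a1 a2 w gth1 gth2 rho =
    measure (relay_measure RD Omega) {r. relay_fails alpha u1 u2 rho a1 a2 w gth1 gth2 r} ^ K"
proof -
  let ?M = "relay_measure RD Omega" and ?F = "{r. relay_fails alpha u1 u2 rho a1 a2 w gth1 gth2 r}"
  interpret finite_product_prob_space "\<lambda>_. ?M" "{..<K}"
    using prob_space_relay_measure[OF assms]
    by (simp add: finite_product_prob_space_def finite_product_sigma_finite_def
        finite_product_sigma_finite_axioms_def product_prob_space_def product_prob_space_axioms_def
        product_sigma_finite_def prob_space_imp_sigma_finite)
  have "?F \<in> sets ?M"
    using relay_fails_measurable[THEN predE] by simp
  have "{s \<in> space (network_measure K RD Omega). trs_outage K alpha u1 u2 rho a1 a2 w gth1 gth2 s} =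
        Pi\<^sub>E {..<K} (\<lambda>_. ?F)"
    unfolding network_measure_def
    by (auto simp: space_PiM trs_outage_iff_all_relays_fail PiE_def Pi_def)
  then show ?thesis
    unfolding P_TRS_def using \<open>?F \<in> sets ?M\<close>
    by (simp add: network_measure_def prob_times)
qed

lemma P_TRS_le_1:
  "0 < RD \<Longrightarrow> 0 < Omega \<Longrightarrow> P_TRS K RD Omega alpha u1 u2 a1 a2 w gth1 gth2 rho \<le> 1"
  unfolding P_TRS_def by (rule prob_space.prob_le_1[OF prob_space_network_measure])

lemma large_scale_nonneg: "0 \<le> g \<Longrightarrow> 0 \<le> large_scale alpha d g"
  unfolding large_scale_def by simp

lemma large_scale_le: "0 \<le> g \<Longrightarrow> large_scale alpha d g \<le> g"
  unfolding large_scale_def using divide_left_mono[of 1 "1 + d powr alpha" g] by (simp add: add_pos_nonneg)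

lemma gD2R_FD_less_if_loop_interference_large:
  assumes "0 < rho" "0 \<le> a1" "0 \<le> a2" "0 < g" "0 \<le> X" "X \<le> 1" "a2 / g < Z"
  shows "gD2R rho a1 a2 1 X Z < g"
proof -
  have "a2 < g * Z"
    using assms(4,7) by (simp add: pos_divide_less_eq mult.commute)
  have "0 \<le> rho * X * a1"
    using assms by simp
  have "0 < Z"
    using \<open>a2 < g * Z\<close> assms(3,4) zero_less_mult_pos[of g Z] by linarith
  have "rho * X * a2 \<le> rho * a2"
    using assms mult_left_le_one_le[of a2 X] by simp
  also have "\<dots> < rho * (g * Z)"
    using \<open>a2 < g * Z\<close> \<open>0 < rho\<close> by simp
  also have "\<dots> \<le> g * (rho * X * a1 + rho * 1 * Z + 1)"
    using mult_nonneg_nonneg[of g "rho * X * a1 + 1"] \<open>0 \<le> rho * X * a1\<close> \<open>0 < g\<close>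
    by (simp add: algebra_simps)
  finally have "rho * X * a2 < g * (rho * X * a1 + rho * 1 * Z + 1)" .
  moreover have "0 < rho * X * a1 + rho * 1 * Z + 1"
    using \<open>0 \<le> rho * X * a1\<close> \<open>0 < rho\<close> \<open>0 < Z\<close> by (simp add: add_nonneg_pos)
  ultimately show ?thesis
    unfolding gD2R_def by (simp add: divide_less_eq mult.commute)
qed

definition blocked_relay_samples :: "real \<Rightarrow> relay_sample set" where
  "blocked_relay_samples c = UNIV \<times> {0..1} \<times> UNIV \<times> UNIV \<times> {c<..}"

lemma relay_fails_FD_if_blocked:
  assumes "0 < rho" "0 \<le> a1" "0 \<le> a2" "0 < gth2"
    and "r \<in> blocked_relay_samples (a2 / gth2)"
  shows "relay_fails alpha u1 u2 rho a1 a2 1 gth1 gth2 r"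
proof -
  obtain p gSR gRD1 gRD2 Z where r: "r = (p, gSR, gRD1, gRD2, Z)"
    and "0 \<le> gSR" "gSR \<le> 1" "a2 / gth2 < Z"
    using assms(5) unfolding blocked_relay_samples_def by auto
  define X where "X = large_scale alpha (norm p) gSR"
  have "0 \<le> X" "X \<le> 1"
    unfolding X_def using \<open>0 \<le> gSR\<close> \<open>gSR \<le> 1\<close> large_scale_nonneg large_scale_le order_trans by blast+
  then have "gD2R rho a1 a2 1 X Z < gth2"
    using assms(1-4) \<open>a2 / gth2 < Z\<close> by (intro gD2R_FD_less_if_loop_interference_large)
  then show ?thesis
    unfolding r relay_fails_def X_def Let_def by simp
qed

lemma measure_blocked_relay_samples_pos:
  assumes "0 < RD" "0 < Omega" "0 \<le> c"
  shows "0 < measure (relay_measure RD Omega) (blocked_relay_samples c)"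
proof -
  interpret prob_space "relay_measure RD Omega"
    using assms(1,2) by (rule prob_space_relay_measure)
  have prob_UNIV: "emeasure M UNIV \<noteq> 0" if "prob_space M" "space M = UNIV" for M :: "'a measure"
    using prob_space.emeasure_space_1[OF that(1)] that(2) by simp
  have "emeasure (exp_dist 1) {0..1} \<noteq> 0"
    by (simp add: emeasure_exp_dist_atLeastAtMost)
  moreover have "emeasure (exp_dist Omega) {c<..} \<noteq> 0"
    using measure_exp_dist_greaterThan[OF assms(2,3)] by (simp add: measure_def)
  ultimately have "emeasure (relay_measure RD Omega) (blocked_relay_samples c) \<noteq> 0"
    unfolding relay_measure_def blocked_relay_samples_def
    using assms
    by (intro emeasure_pair_measure_Times_neq_0 prob_UNIV prob_space_imp_sigma_finite
        prob_space_pair prob_space_exp_dist prob_space_uniform_cball pair_measureI)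
       (auto simp: space_pair_measure)
  then show ?thesis
    by (simp add: emeasure_eq_measure zero_less_measure_iff)
qed

lemma P_TRS_FD_ge_blocked_power:
  assumes "0 < RD" "0 < Omega" "0 < rho" "0 \<le> a1" "0 \<le> a2" "0 < gth RD2"
  shows "measure (relay_measure RD Omega) (blocked_relay_samples (a2 / gth RD2)) ^ K
    \<le> P_TRS_FD K RD Omega alpha u1 u2 a1 a2 RD1 RD2 rho"
proof -
  interpret prob_space "relay_measure RD Omega"
    using assms(1,2) by (rule prob_space_relay_measure)
  have "blocked_relay_samples (a2 / gth RD2)
      \<subseteq> {r. relay_fails alpha u1 u2 rho a1 a2 1 (gth RD1) (gth RD2) r}"
    using relay_fails_FD_if_blocked[OF assms(3-6)] by blast
  moreover have "{r. relay_fails alpha u1 u2 rho a1 a2 1 (gth RD1) (gth RD2) r} \<in> events"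
    using relay_fails_measurable[THEN predE] by simp
  ultimately have "prob (blocked_relay_samples (a2 / gth RD2))
      \<le> prob {r. relay_fails alpha u1 u2 rho a1 a2 1 (gth RD1) (gth RD2) r}"
    by (rule finite_measure_mono)
  then show ?thesis
    unfolding P_TRS_FD_def P_TRS_eq_power[OF assms(1,2)] by (simp add: power_mono)
qed

theorem mainTheorem3:
  fixes K :: nat and RD Omega alpha a1 a2 RD1 RD2 :: real and u1 u2 :: "real \<times> real"
  assumes "K \<ge> 1" and "RD > 0" and "Omega > 0" and "alpha > 0"
    and "norm u1 > 0" and "norm u2 > 0"
    and "RD1 > 0" and "RD2 > 0"
    and "0 < a1" and "a1 < a2" and "a1 + a2 = 1" and "a2 > a1 * gth RD2"
  shows "((\<lambda>rho. - (ln (P_TRS_FD K RD Omega alpha u1 u2 a1 a2 RD1 RD2 rho) / ln rho))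
           \<longlongrightarrow> 0) at_top"
proof -
  define p where "p = measure (relay_measure RD Omega) (blocked_relay_samples (a2 / gth RD2))"
  have "0 < gth RD2"
    using \<open>RD2 > 0\<close> by (simp add: gth_def)
  then have "0 < p"
    unfolding p_def using assms by (intro measure_blocked_relay_samples_pos) auto
  have "\<forall>\<^sub>F rho in at_top. p ^ K \<le> P_TRS_FD K RD Omega alpha u1 u2 a1 a2 RD1 RD2 rho
      \<and> P_TRS_FD K RD Omega alpha u1 u2 a1 a2 RD1 RD2 rho \<le> 1"
    using eventually_gt_at_top[of 0]
  proof eventually_elim
    case (elim rho)
    have "P_TRS_FD K RD Omega alpha u1 u2 a1 a2 RD1 RD2 rho \<le> 1"
      unfolding P_TRS_FD_def using assms by (intro P_TRS_le_1)
    with elim show ?case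
      unfolding p_def using assms \<open>0 < gth RD2\<close> by (simp add: P_TRS_FD_ge_blocked_power)
  qed
  with \<open>0 < p\<close> show ?thesis
    by (intro ln_div_ln_tendsto_0_if_bounded_below[of "p ^ K"]) auto
qed

end
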